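(* Let $J\subseteq[n]$. If $\pi,\hat\pi\in S_J$ are joined by an edge of the bridge polytope $\mathrm{Br}_J$, then there exists a transposition $(i\,\ell)$ such that $\hat\pi=(i\,\ell)\pi$.
   Context: For $J\subseteq[n]$, $S_J=\{\pi\in S_n:\ \pi(j)\ge j \text{ for } j\in J,\ \pi(j)\le j \text{ for } j\notin J\}$ and $\mathrm{Br}_J=\operatorname{conv}\{(\pi(1),\dots,\pi(n)):\pi\in S_J\}\subset\mathbb{R}^n$, each $\pi\in S_J$ being identified with the vertex $(\pi(1),\dots,\pi(n))$. For a transposition $(i\,\ell)$, $(i\,\ell)\pi$ denotes $(i\,\ell)\circ\pi$, the permutation obtained from $\pi$ by swapping the values $i$ and $\ell$. *)

theory Defs
  imports "HOL-Analysis.Analysis" "HOL-Combinatorics.Transposition"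
begin

text \<open>The ground set [n] is modelled by a finite linearly ordered index type 'n
  (so n = CARD('n)); position j has rank pos j in 1..n.\<close>

definition pos :: "'n::{finite,linorder} \<Rightarrow> nat" where
  "pos j = card {k. k \<le> j}"

definition S_J :: "'n::{finite,linorder} set \<Rightarrow> ('n::{finite,linorder} \<Rightarrow> 'n) set" where
  "S_J J = {\<pi>. \<pi> permutes UNIV \<and> (\<forall>j\<in>J. j \<le> \<pi> j) \<and> (\<forall>j. j \<notin> J \<longrightarrow> \<pi> j \<le> j)}"

definition pvec :: "('n::{finite,linorder} \<Rightarrow> 'n) \<Rightarrow> real ^ ('n::{finite,linorder})" where
  "pvec \<pi> = (\<chi> j. real (pos (\<pi> j)))"

definition Br :: "'n::{finite,linorder} set \<Rightarrow> (real ^ ('n::{finite,linorder})) set" where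
  "Br J = convex hull (pvec ` S_J J)"

definition joined_by_edge :: "(real ^ 'n::finite) set \<Rightarrow> real ^ 'n \<Rightarrow> real ^ 'n \<Rightarrow> bool" where
  "joined_by_edge P p q \<longleftrightarrow> p \<noteq> q \<and> closed_segment p q face_of P"

end

theory Submission
  imports Defs
begin

text \<open>The edge is an exposed face of the polytope, so some linear functional w attains its
  maximum over the vertices pvec \<sigma>, \<sigma> \<in> S_J J, exactly at \<pi> and \<pi>' (all vertices lie on
  one sphere, so no third vertex lies on the segment). If \<pi>' were not a transposition of \<pi>,
  w could not tie on any pair of positions whose values may be exchanged within S_J J, since
  the exchanged permutation would then be a third maximiser. For such a generic maximiser, an
  induction on the gap between values shows that at every level k the positions with value
  at least k are strictly heavier than all positions that could replace them. Since
  w \<bullet> pvec \<sigma> is the sum over k of the weights of the level sets \<sigma> -` {k..}, an exchange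
  argument makes \<pi> the unique maximiser, contradicting \<pi>' \<noteq> \<pi>.\<close>

lemma closed_segment_sphere_endpoint:
  fixes x y z :: "'a::real_inner"
  assumes "z \<in> closed_segment x y" and "norm x = r" "norm y = r" "norm z = r"
  shows "z = x \<or> z = y"
proof -
  obtain u where u: "0 \<le> u" "u \<le> 1" and z: "z = (1 - u) *\<^sub>R x + u *\<^sub>R y"
    using assms(1) by (auto simp: closed_segment_def)
  have "norm z ^ 2 = (1 - u) * norm x ^ 2 + u * norm y ^ 2 - u * (1 - u) * norm (x - y) ^ 2"
    unfolding z power2_norm_eq_inner by (simp add: algebra_simps inner_commute)
  then have "u * (1 - u) * norm (x - y) ^ 2 = 0"
    using assms(2-4) by (simp add: algebra_simps)
  then have "u = 0 \<or> u = 1 \<or> x = y" by auto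
  then show ?thesis using z by auto
qed

lemma sum_less_sum_exchange:
  fixes w :: "'a \<Rightarrow> 'b::ordered_cancel_comm_monoid_add"
  assumes "finite A" "finite B" "card A = card B" "A \<noteq> B"
    and less: "\<And>x y. x \<in> A - B \<Longrightarrow> y \<in> B - A \<Longrightarrow> w y < w x"
  shows "sum w B < sum w A"
proof -
  have card_diff: "card (A - B) = card (B - A)"
    using assms(1-3) card_Int_Diff[of A B] card_Int_Diff[of B A] by (simp add: Int_commute)
  then obtain g where g: "bij_betw g (A - B) (B - A)"
    using finite_same_card_bij[OF finite_Diff[OF assms(1)] finite_Diff[OF assms(2)]] by blast
  have "A - B \<noteq> {}"
    using assms(1,2,4) card_diff by (metis Diff_eq_empty_iff card_0_eq finite_Diff subset_antisym)
  then have "sum (w \<circ> g) (A - B) < sum w (A - B)"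
    using assms(1) less bij_betwE[OF g] by (intro sum_strict_mono) auto
  then have "sum w (B - A) < sum w (A - B)"
    using sum.reindex_bij_betw[OF g, of w] by simp
  then show ?thesis
    using assms(1,2) sum.Int_Diff[of A w B] sum.Int_Diff[of B w A]
    by (simp add: Int_commute add_strict_left_mono)
qed

lemma levels_eq_imp_eq:
  fixes \<sigma> \<pi> :: "'a \<Rightarrow> 'b::linorder"
  assumes "\<And>k. \<sigma> -` {k..} = \<pi> -` {k..}"
  shows "\<sigma> = \<pi>"
proof
  fix j
  have "\<sigma> j \<le> \<pi> j" and "\<pi> j \<le> \<sigma> j"
    using assms[of "\<sigma> j"] assms[of "\<pi> j"] by (auto simp: set_eq_iff)
  then show "\<sigma> j = \<pi> j" by (rule antisym)
qed

lemma transpose_values_comp: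
  assumes "bij f"
  shows "Transposition.transpose (f p) (f q) \<circ> f = f \<circ> Transposition.transpose p q"
  using transpose_comp_eq[OF assms] assms by (simp add: bij_is_inj)

lemma strict_mono_pos: "strict_mono (pos :: 'n::{finite,linorder} \<Rightarrow> nat)"
  unfolding strict_mono_def pos_def
  by (intro allI impI psubset_card_mono) (auto intro: order.trans simp: set_eq_iff leD)

lemma pvec_eq_iff: "pvec \<sigma> = pvec \<tau> \<longleftrightarrow> \<sigma> = \<tau>"
  by (simp add: pvec_def vec_eq_iff fun_eq_iff strict_mono_eq[OF strict_mono_pos])

lemma inner_pvec_levels:
  "w \<bullet> pvec \<sigma> = (\<Sum>k\<in>UNIV. \<Sum>j\<in>\<sigma> -` {k..}. w $ j)"
proof -
  have "w \<bullet> pvec \<sigma> = (\<Sum>j\<in>UNIV. \<Sum>k\<in>{k\<in>UNIV. k \<le> \<sigma> j}. w $ j)"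
    by (simp add: inner_vec_def pvec_def pos_def mult.commute)
  also have "\<dots> = (\<Sum>k\<in>UNIV. \<Sum>j\<in>{j\<in>UNIV. k \<le> \<sigma> j}. w $ j)"
    by (rule sum.swap_restrict) auto
  finally show ?thesis by (simp add: vimage_def atLeast_def)
qed

lemma inner_pvec_self_permutes:
  fixes \<sigma> :: "'n::{finite,linorder} \<Rightarrow> 'n"
  assumes "\<sigma> permutes UNIV"
  shows "pvec \<sigma> \<bullet> pvec \<sigma> = (\<Sum>j::'n\<in>UNIV. real (pos j) ^ 2)"
proof -
  have "(\<Sum>j\<in>UNIV. real (pos (\<sigma> j)) ^ 2) = (\<Sum>j::'n\<in>UNIV. real (pos j) ^ 2)"
    using sum.permute[OF assms, of "\<lambda>j. real (pos j) ^ 2"] by (simp add: comp_def)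
  then show ?thesis by (simp add: inner_vec_def pvec_def power2_eq_square)
qed

lemma norm_pvec_permutes:
  fixes \<sigma> \<tau> :: "'n::{finite,linorder} \<Rightarrow> 'n"
  assumes "\<sigma> permutes UNIV" and "\<tau> permutes UNIV"
  shows "norm (pvec \<sigma>) = norm (pvec \<tau>)"
  by (simp add: norm_eq_sqrt_inner inner_pvec_self_permutes[OF assms(1)]
      inner_pvec_self_permutes[OF assms(2)])

lemma S_J_permutes: "\<sigma> \<in> S_J J \<Longrightarrow> \<sigma> permutes UNIV"
  by (simp add: S_J_def)

lemma S_J_ge: "\<sigma> \<in> S_J J \<Longrightarrow> j \<in> J \<Longrightarrow> j \<le> \<sigma> j"
  by (simp add: S_J_def)

lemma S_J_le: "\<sigma> \<in> S_J J \<Longrightarrow> j \<notin> J \<Longrightarrow> \<sigma> j \<le> j"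
  by (simp add: S_J_def)

definition swappable :: "'n::{finite,linorder} set \<Rightarrow> ('n \<Rightarrow> 'n) \<Rightarrow> 'n \<Rightarrow> 'n \<Rightarrow> bool" where
  "swappable J \<pi> p q \<longleftrightarrow> \<pi> q < \<pi> p \<and> (p \<in> J \<longrightarrow> p \<le> \<pi> q) \<and> (q \<notin> J \<longrightarrow> \<pi> p \<le> q)"

lemma swappable_comp_transpose_S_J:
  assumes "\<pi> \<in> S_J J" and "swappable J \<pi> p q"
  shows "\<pi> \<circ> Transposition.transpose p q \<in> S_J J"
proof -
  have "\<pi> \<circ> Transposition.transpose p q permutes UNIV"
    using S_J_permutes[OF assms(1)] by (intro permutes_compose permutes_swap_id) auto
  moreover have "j \<le> \<pi> (Transposition.transpose p q j)" if "j \<in> J" for j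
    using assms that S_J_ge[OF assms(1) that] S_J_ge[OF assms(1), of q]
    by (cases "j = p"; cases "j = q") (auto simp: swappable_def intro: order.trans)
  moreover have "\<pi> (Transposition.transpose p q j) \<le> j" if "j \<notin> J" for j
    using assms that S_J_le[OF assms(1) that] S_J_le[OF assms(1), of p]
    by (cases "j = p"; cases "j = q") (auto simp: swappable_def intro: order.trans)
  ultimately show ?thesis by (simp add: S_J_def)
qed

lemma inner_pvec_comp_transpose:
  assumes "p \<noteq> q"
  shows "w \<bullet> pvec (\<pi> \<circ> Transposition.transpose p q) - w \<bullet> pvec \<pi>
         = (w $ q - w $ p) * (real (pos (\<pi> p)) - real (pos (\<pi> q)))"
proof -
  let ?d = "\<lambda>j. w $ j * real (pos (\<pi> (Transposition.transpose p q j))) - w $ j * real (pos (\<pi> j))"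
  have "w \<bullet> pvec (\<pi> \<circ> Transposition.transpose p q) - w \<bullet> pvec \<pi> = (\<Sum>j\<in>UNIV. ?d j)"
    by (simp add: inner_vec_def pvec_def sum_subtractf)
  also have "\<dots> = (\<Sum>j\<in>{p, q}. ?d j)"
    by (rule sum.mono_neutral_right) auto
  also have "\<dots> = (w $ q - w $ p) * (real (pos (\<pi> p)) - real (pos (\<pi> q)))"
    using assms by (simp add: algebra_simps)
  finally show ?thesis .
qed

lemma swappable_imp_weight_le:
  assumes "\<pi> \<in> S_J J" and "swappable J \<pi> p q"
    and max: "\<And>\<sigma>. \<sigma> \<in> S_J J \<Longrightarrow> w \<bullet> pvec \<sigma> \<le> w \<bullet> pvec \<pi>"
  shows "w $ q \<le> w $ p"
proof -
  have "\<pi> q < \<pi> p" using assms(2) by (simp add: swappable_def)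
  then have "p \<noteq> q" and gap: "real (pos (\<pi> q)) < real (pos (\<pi> p))"
    using strict_mono_less[OF strict_mono_pos] by auto
  have "(w $ q - w $ p) * (real (pos (\<pi> p)) - real (pos (\<pi> q))) \<le> 0"
    using max[OF swappable_comp_transpose_S_J[OF assms(1,2)]]
      inner_pvec_comp_transpose[OF \<open>p \<noteq> q\<close>, of w \<pi>] by linarith
  with gap show ?thesis by (simp add: mult_le_0_iff)
qed

text \<open>By separableI, these are the pairs for which some level k satisfies
  \<pi> q < k \<le> \<pi> p while both p and q are free to lie on either side of k within S_J J.\<close>

definition separable :: "'n::{finite,linorder} set \<Rightarrow> ('n \<Rightarrow> 'n) \<Rightarrow> 'n \<Rightarrow> 'n \<Rightarrow> bool" where
  "separable J \<pi> p q \<longleftrightarrow> \<pi> q < \<pi> p \<and> (p \<in> J \<longrightarrow> p < \<pi> p) \<and> (q \<notin> J \<longrightarrow> \<pi> q < q)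
     \<and> (p \<in> J \<and> q \<notin> J \<longrightarrow> p < q)"

lemma separableI:
  assumes "\<pi> \<in> S_J J" and "\<pi> q < k" "k \<le> \<pi> p" "p \<in> J \<longrightarrow> p < k" "q \<notin> J \<longrightarrow> k \<le> q"
  shows "separable J \<pi> p q"
  using assms S_J_le[OF assms(1), of q] S_J_ge[OF assms(1), of p]
  unfolding separable_def by (auto intro: less_le_trans le_less_trans)

text \<open>The intermediate position r is the preimage of whichever of p, q blocks the swap.\<close>

lemma separable_not_swappable_split:
  assumes "\<pi> \<in> S_J J" and "separable J \<pi> p q" and "\<not> swappable J \<pi> p q"
  obtains r where "separable J \<pi> p r" "separable J \<pi> r q"
proof -
  have perm: "\<pi> permutes UNIV" using S_J_permutes[OF assms(1)] .
  have "\<pi> q < \<pi> p" using assms(2) by (simp add: separable_def)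
  then consider "p \<in> J" "\<pi> q < p" | "q \<notin> J" "q < \<pi> p"
    using assms(3) by (auto simp: swappable_def)
  then show ?thesis
  proof cases
    case 1
    define r where "r = inv \<pi> p"
    have r: "\<pi> r = p" using permutes_inverses(1)[OF perm] by (simp add: r_def)
    have "separable J \<pi> p r" "separable J \<pi> r q"
      using 1 r assms(2) S_J_ge[OF assms(1), of r] S_J_le[OF assms(1), of r]
      unfolding separable_def by (auto simp: le_less)
    then show ?thesis by (rule that)
  next
    case 2
    define r where "r = inv \<pi> q"
    have r: "\<pi> r = q" using permutes_inverses(1)[OF perm] by (simp add: r_def)
    have "separable J \<pi> p r" "separable J \<pi> r q"
      using 2 r assms(2) S_J_ge[OF assms(1), of r] S_J_le[OF assms(1), of r]
      unfolding separable_def by (auto simp: le_less)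
    then show ?thesis by (rule that)
  qed
qed

lemma separable_imp_weight_less:
  assumes "\<pi> \<in> S_J J"
    and max: "\<And>\<sigma>. \<sigma> \<in> S_J J \<Longrightarrow> w \<bullet> pvec \<sigma> \<le> w \<bullet> pvec \<pi>"
    and generic: "\<And>p q. swappable J \<pi> p q \<Longrightarrow> w $ p \<noteq> w $ q"
  shows "separable J \<pi> p q \<Longrightarrow> w $ q < w $ p"
proof (induction "pos (\<pi> p) - pos (\<pi> q)" arbitrary: p q rule: less_induct)
  case less
  show ?case
  proof (cases "swappable J \<pi> p q")
    case True
    then show ?thesis
      using swappable_imp_weight_le[OF assms(1) True max] generic[OF True] by simp
  next
    case False
    obtain r where r: "separable J \<pi> p r" "separable J \<pi> r q"
      using separable_not_swappable_split[OF assms(1) less.prems False] .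
    then have "pos (\<pi> q) < pos (\<pi> r)" "pos (\<pi> r) < pos (\<pi> p)"
      using strict_mono_less[OF strict_mono_pos] by (auto simp: separable_def)
    then have "w $ r < w $ p" and "w $ q < w $ r"
      using less.hyps r by auto
    then show ?thesis by simp
  qed
qed

lemma card_level_permutes:
  assumes "\<sigma> permutes UNIV"
  shows "card (\<sigma> -` {k..}) = card {k..}"
  by (rule card_vimage_inj) (use permutes_inj[OF assms] permutes_surj[OF assms] in auto)

lemma level_weight_less:
  fixes w :: "real ^ 'n::{finite,linorder}"
  assumes "\<pi> \<in> S_J J" "\<sigma> \<in> S_J J" and "\<sigma> -` {k..} \<noteq> \<pi> -` {k..}"
    and sep: "\<And>p q. separable J \<pi> p q \<Longrightarrow> w $ q < w $ p"
  shows "(\<Sum>j\<in>\<sigma> -` {k..}. w $ j) < (\<Sum>j\<in>\<pi> -` {k..}. w $ j)"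
proof (rule sum_less_sum_exchange)
  show "card (\<pi> -` {k..}) = card (\<sigma> -` {k..})"
    using assms(1,2) by (simp add: card_level_permutes S_J_permutes)
  show "\<pi> -` {k..} \<noteq> \<sigma> -` {k..}"
    using assms(3) by (rule not_sym)
  show "w $ y < w $ x" if "x \<in> \<pi> -` {k..} - \<sigma> -` {k..}" "y \<in> \<sigma> -` {k..} - \<pi> -` {k..}" for x y
  proof (rule sep, rule separableI[OF assms(1)])
    show "\<pi> y < k" "k \<le> \<pi> x" using that by auto
    show "x \<in> J \<longrightarrow> x < k" using that S_J_ge[OF assms(2), of x] by auto
    show "y \<notin> J \<longrightarrow> k \<le> y" using that S_J_le[OF assms(2), of y] by auto
  qed
qed simp_all

lemma unique_maximizer_S_J:
  fixes w :: "real ^ 'n::{finite,linorder}"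
  assumes "\<pi> \<in> S_J J"
    and max: "\<And>\<sigma>. \<sigma> \<in> S_J J \<Longrightarrow> w \<bullet> pvec \<sigma> \<le> w \<bullet> pvec \<pi>"
    and generic: "\<And>p q. swappable J \<pi> p q \<Longrightarrow> w $ p \<noteq> w $ q"
    and "\<sigma> \<in> S_J J" and "w \<bullet> pvec \<sigma> = w \<bullet> pvec \<pi>"
  shows "\<sigma> = \<pi>"
proof (rule ccontr)
  assume "\<sigma> \<noteq> \<pi>"
  then obtain k where k: "\<sigma> -` {k..} \<noteq> \<pi> -` {k..}"
    by (meson levels_eq_imp_eq)
  have less: "(\<Sum>j\<in>\<sigma> -` {k..}. w $ j) < (\<Sum>j\<in>\<pi> -` {k..}. w $ j)"
    if "\<sigma> -` {k..} \<noteq> \<pi> -` {k..}" for k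
    using level_weight_less[OF assms(1,4) that separable_imp_weight_less[OF assms(1) max generic]] .
  have "(\<Sum>k\<in>UNIV. \<Sum>j\<in>\<sigma> -` {k..}. w $ j) < (\<Sum>k\<in>UNIV. \<Sum>j\<in>\<pi> -` {k..}. w $ j)"
  proof (rule sum_strict_mono_ex1)
    show "\<forall>k\<in>UNIV. (\<Sum>j\<in>\<sigma> -` {k..}. w $ j) \<le> (\<Sum>j\<in>\<pi> -` {k..}. w $ j)"
    proof
      fix k
      show "(\<Sum>j\<in>\<sigma> -` {k..}. w $ j) \<le> (\<Sum>j\<in>\<pi> -` {k..}. w $ j)"
        using less[of k] by (cases "\<sigma> -` {k..} = \<pi> -` {k..}") simp_all
    qed
    show "\<exists>k\<in>UNIV. (\<Sum>j\<in>\<sigma> -` {k..}. w $ j) < (\<Sum>j\<in>\<pi> -` {k..}. w $ j)"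
      using less[OF k] by blast
  qed simp
  with assms(5) show False by (simp add: inner_pvec_levels)
qed

lemma edge_exposing_functional:
  fixes \<pi> \<pi>' :: "'n::{finite,linorder} \<Rightarrow> 'n"
  assumes "\<pi> \<in> S_J J" "\<pi>' \<in> S_J J" and edge: "joined_by_edge (Br J) (pvec \<pi>) (pvec \<pi>')"
  obtains w where "\<And>\<sigma>. \<sigma> \<in> S_J J \<Longrightarrow> w \<bullet> pvec \<sigma> \<le> w \<bullet> pvec \<pi>"
    and "w \<bullet> pvec \<pi>' = w \<bullet> pvec \<pi>"
    and "\<And>\<sigma>. \<sigma> \<in> S_J J \<Longrightarrow> w \<bullet> pvec \<sigma> = w \<bullet> pvec \<pi> \<Longrightarrow> \<sigma> = \<pi> \<or> \<sigma> = \<pi>'"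
proof -
  have "polyhedron (Br J)"
    unfolding Br_def by (simp add: polyhedron_convex_hull)
  moreover have "closed_segment (pvec \<pi>) (pvec \<pi>') face_of Br J"
    using edge by (simp add: joined_by_edge_def)
  ultimately have "closed_segment (pvec \<pi>) (pvec \<pi>') exposed_face_of Br J"
    by (simp add: exposed_face_of_polyhedron)
  then obtain w b where sub: "Br J \<subseteq> {x. w \<bullet> x \<le> b}"
    and seg: "closed_segment (pvec \<pi>) (pvec \<pi>') = Br J \<inter> {x. w \<bullet> x = b}"
    unfolding exposed_face_of_def by blast
  have vertex: "pvec \<sigma> \<in> Br J" if "\<sigma> \<in> S_J J" for \<sigma>
    unfolding Br_def by (rule hull_inc) (use that in simp)
  have "pvec \<pi> \<in> closed_segment (pvec \<pi>) (pvec \<pi>')" "pvec \<pi>' \<in> closed_segment (pvec \<pi>) (pvec \<pi>')"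
    by simp_all
  then have b: "w \<bullet> pvec \<pi> = b" and b': "w \<bullet> pvec \<pi>' = b"
    unfolding seg by simp_all
  have same_norm: "norm (pvec \<sigma>) = norm (pvec \<pi>)" if "\<sigma> \<in> S_J J" for \<sigma>
    using norm_pvec_permutes[OF S_J_permutes[OF that] S_J_permutes[OF assms(1)]] .
  show ?thesis
  proof (rule that)
    show "w \<bullet> pvec \<sigma> \<le> w \<bullet> pvec \<pi>" if "\<sigma> \<in> S_J J" for \<sigma>
      using sub vertex[OF that] b by auto
    show "w \<bullet> pvec \<pi>' = w \<bullet> pvec \<pi>"
      using b b' by simp
    show "\<sigma> = \<pi> \<or> \<sigma> = \<pi>'" if "\<sigma> \<in> S_J J" "w \<bullet> pvec \<sigma> = w \<bullet> pvec \<pi>" for \<sigma>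
    proof -
      have "pvec \<sigma> \<in> closed_segment (pvec \<pi>) (pvec \<pi>')"
        using seg vertex[OF that(1)] that(2) b by auto
      then have "pvec \<sigma> = pvec \<pi> \<or> pvec \<sigma> = pvec \<pi>'"
        by (rule closed_segment_sphere_endpoint[OF _ refl same_norm[OF assms(2)] same_norm[OF that(1)]])
      then show ?thesis by (simp add: pvec_eq_iff)
    qed
  qed
qed

lemma swappable_weight_eq_imp_edge_transposition:
  assumes "\<pi> \<in> S_J J" and "swappable J \<pi> p q" and "w $ p = w $ q"
    and on_edge: "\<And>\<sigma>. \<sigma> \<in> S_J J \<Longrightarrow> w \<bullet> pvec \<sigma> = w \<bullet> pvec \<pi> \<Longrightarrow> \<sigma> = \<pi> \<or> \<sigma> = \<pi>'"
  shows "\<pi>' = Transposition.transpose (\<pi> p) (\<pi> q) \<circ> \<pi>"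
proof -
  let ?\<sigma> = "\<pi> \<circ> Transposition.transpose p q"
  have "\<pi> q < \<pi> p" using assms(2) by (simp add: swappable_def)
  then have "p \<noteq> q" and "?\<sigma> \<noteq> \<pi>"
    by (auto simp: fun_eq_iff intro!: exI[of _ p])
  moreover have "w \<bullet> pvec ?\<sigma> = w \<bullet> pvec \<pi>"
    using inner_pvec_comp_transpose[OF \<open>p \<noteq> q\<close>, of w \<pi>] assms(3) by simp
  ultimately have "\<pi>' = ?\<sigma>"
    using on_edge[OF swappable_comp_transpose_S_J[OF assms(1,2)]] by simp
  also have "\<dots> = Transposition.transpose (\<pi> p) (\<pi> q) \<circ> \<pi>"
    using transpose_values_comp[OF permutes_bij[OF S_J_permutes[OF assms(1)]]] by simp
  finally show ?thesis .
qed

theorem lemma4p4: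
  fixes J :: "'n::{finite,linorder} set" and \<pi> \<pi>' :: "'n \<Rightarrow> 'n"
  assumes "\<pi> \<in> S_J J" and "\<pi>' \<in> S_J J"
    and "joined_by_edge (Br J) (pvec \<pi>) (pvec \<pi>')"
  shows "\<exists>i l. i \<noteq> l \<and> \<pi>' = Transposition.transpose i l \<circ> \<pi>"
proof (rule ccontr)
  assume not_transposition: "\<not> ?thesis"
  obtain w where max: "\<And>\<sigma>. \<sigma> \<in> S_J J \<Longrightarrow> w \<bullet> pvec \<sigma> \<le> w \<bullet> pvec \<pi>"
    and tie: "w \<bullet> pvec \<pi>' = w \<bullet> pvec \<pi>"
    and on_edge: "\<And>\<sigma>. \<sigma> \<in> S_J J \<Longrightarrow> w \<bullet> pvec \<sigma> = w \<bullet> pvec \<pi> \<Longrightarrow> \<sigma> = \<pi> \<or> \<sigma> = \<pi>'"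
    by (rule edge_exposing_functional[OF assms]) fast
  have generic: "w $ p \<noteq> w $ q" if "swappable J \<pi> p q" for p q
  proof
    assume "w $ p = w $ q"
    then have "\<pi>' = Transposition.transpose (\<pi> p) (\<pi> q) \<circ> \<pi>"
      using swappable_weight_eq_imp_edge_transposition[OF assms(1) that] on_edge by blast
    moreover have "\<pi> p \<noteq> \<pi> q" using that by (auto simp: swappable_def)
    ultimately show False using not_transposition by blast
  qed
  have "\<pi>' = \<pi>"
    using unique_maximizer_S_J[OF assms(1) max generic assms(2) tie] .
  then show False
    using assms(3) by (simp add: joined_by_edge_def)
qed

end
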